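(* Consider the noisy Hegselmann–Krause model with homogeneously stubborn agents described in the context, with $n\ge 1$ regular agents, a nonempty set $\mathcal{B}_1$ of stubborn agents with common constant opinion $B_1\in[0,1]$, and confidence bound $\epsilon\in(0,1]$. For every initial condition $x(0)\in[0,1]^n$ and every noise bound $\delta\in\left(0,\frac{\epsilon}{2(n+1)}\right)$, almost surely $$d_{\mathcal{V}}:=\limsup_{t\to\infty}\max_{i,j\in\mathcal{V}}|x_i(t)-x_j(t)|\le 2\delta \quad\text{and}\quad d_{\mathcal{V}}^{B_1}:=\limsup_{t\to\infty}\max_{i\in\mathcal{V}}|x_i(t)-B_1|\le (n+1)\delta .$$
   Context: Regular agents: $\mathcal{V}=\{1,\dots,n\}$, with opinions $x_i(t)\in[0,1]$, $t=0,1,2,\dots$. Stubborn agents: a finite nonempty index set $\mathcal{B}_1$ disjoint from $\mathcal{V}$, with $x_k(t)\equiv B_1$ for all $k\in\mathcal{B}_1$ and all $t\ge0$, where $B_1\in[0,1]$ is fixed. For $i\in\mathcal{V}$, the neighbor set is $\mathcal{N}(i,x(t))=\{j\in\mathcal{V}\cup\mathcal{B}_1: |x_j(t)-x_i(t)|\le\epsilon\}$ (it contains $i$). The update for $i\in\mathcal{V}$ is $x_i^*(t)=|\mathcal{N}(i,x(t))|^{-1}\sum_{j\in\mathcal{N}(i,x(t))}x_j(t)+\xi_i(t+1)$, and $x_i(t+1)=1$ if $x_i^*(t)>1$, $x_i(t+1)=x_i^*(t)$ if $x_i^*(t)\in[0,1]$, $x_i(t+1)=0$ if $x_i^*(t)<0$.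 The noises $\{\xi_i(t)\}_{i\in\mathcal{V},t\ge1}$ are i.i.d. real random variables with $E\xi_1(1)=0$, $E\xi_1(1)^2>0$ and $|\xi_1(1)|\le\delta$ almost surely. *)

theory Defs
  imports "HOL-Probability.Probability"
begin

text \<open>Regular agents are indexed by V = {1..n}; stubborn agents by a finite nonempty set Bs of
naturals disjoint from {1..n}. An opinion profile is a function nat => real.\<close>

definition clip01 :: "real \<Rightarrow> real" where
  "clip01 z = (if z > 1 then 1 else if z < 0 then 0 else z)"

definition hk_nbrs :: "nat \<Rightarrow> nat set \<Rightarrow> real \<Rightarrow> (nat \<Rightarrow> real) \<Rightarrow> nat \<Rightarrow> nat set" where
  "hk_nbrs n Bs eps x i = {j \<in> {1..n} \<union> Bs. \<bar>x j - x i\<bar> \<le> eps}"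

text \<open>hk_traj n Bs b1 eps x0 xi t : opinions of all agents at time t, for one noise realisation
xi i t (agent i, time t \<ge> 1).\<close>
fun hk_traj :: "nat \<Rightarrow> nat set \<Rightarrow> real \<Rightarrow> real \<Rightarrow> (nat \<Rightarrow> real) \<Rightarrow> (nat \<Rightarrow> nat \<Rightarrow> real)
    \<Rightarrow> nat \<Rightarrow> nat \<Rightarrow> real" where
  "hk_traj n Bs b1 eps x0 xi 0 = (\<lambda>k. if k \<in> Bs then b1 else x0 k)"
| "hk_traj n Bs b1 eps x0 xi (Suc t) =
    (let x = hk_traj n Bs b1 eps x0 xi t in
     (\<lambda>k. if k \<in> Bs then b1
          else if k \<in> {1..n} then
            clip01 ((\<Sum>j\<in>hk_nbrs n Bs eps x k. x j) / real (card (hk_nbrs n Bs eps x k))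
                    + xi k (Suc t))
          else x0 k))"

end

theory Submission
  imports Defs
begin

text \<open>
Every neighbourhood average contains the stubborn opinion b1 at least once among at most n + 1
terms, so while all regular agents are within eps of b1 their deviation from b1 contracts as
u \<mapsto> n/(n+1) u + delta, whose fixed point is (n+1) delta; once all deviations are at most
eps/2, every regular agent sees every other one, all averages coincide and only the noise
separates the agents, by at most 2 delta. It remains to reach the band of half-width eps/2
around b1. Since the noise has mean zero and positive variance, both noise \<le> -c and
noise \<ge> c have positive probability for some c > 0; by independence and
Borel-Cantelli, almost surely there is a block of K \<ge> 1/c steps of noise \<le> -c for all agents,
followed by K steps of noise \<ge> c. The first half pushes every regular agent down to at most b1,
the second pushes every one up to at least b1 while the contraction keeps them below
b1 + eps/2.
\<close>

lemma clip01_le_max: "clip01 z \<le> max z 0"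
  by (simp add: clip01_def)

lemma clip01_ge_min: "min z 1 \<le> clip01 z"
  by (simp add: clip01_def)

lemma clip01_bounds: "0 \<le> clip01 z \<and> clip01 z \<le> 1"
  by (simp add: clip01_def)

lemma clip01_abs_diff_le: "\<bar>clip01 a - clip01 b\<bar> \<le> \<bar>a - b\<bar>"
  by (simp add: clip01_def)

lemma clip01_signed_dev_le:
  assumes "s = 1 \<or> s = -1" and "0 \<le> b" and "b \<le> 1"
  shows "s * (clip01 z - b) \<le> max (s * (z - b)) 0"
  using assms by (auto simp: clip01_def)

lemma limsup_ereal_le_if_eventually_le:
  fixes f g :: "nat \<Rightarrow> real"
  assumes "eventually (\<lambda>t. f t \<le> g t) sequentially" and "g \<longlonglongrightarrow> l"
  shows "limsup (\<lambda>t. ereal (f t)) \<le> ereal l"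
proof -
  have "limsup (\<lambda>t. ereal (f t)) \<le> limsup (\<lambda>t. ereal (g t))"
    by (rule Limsup_mono) (use assms(1) in \<open>auto elim: eventually_mono\<close>)
  also have "\<dots> = ereal l" by (intro lim_imp_Limsup tendsto_ereal assms(2)) simp
  finally show ?thesis .
qed

locale hk_system =
  fixes n :: nat and Bs :: "nat set" and b1 eps :: real
  assumes n_ge_1: "n \<ge> 1" and finite_Bs: "finite Bs" and Bs_nonempty: "Bs \<noteq> {}"
    and Bs_disjoint: "Bs \<inter> {1..n} = {}" and b1_nonneg: "0 \<le> b1" and b1_le_1: "b1 \<le> 1"
    and eps_pos: "0 < eps"
begin

definition nbr_avg :: "(nat \<Rightarrow> real) \<Rightarrow> nat \<Rightarrow> real" where
  "nbr_avg x k = (\<Sum>j\<in>hk_nbrs n Bs eps x k. x j) / real (card (hk_nbrs n Bs eps x k))"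

lemma hk_nbrs_subset: "hk_nbrs n Bs eps x k \<subseteq> {1..n} \<union> Bs"
  by (auto simp: hk_nbrs_def)

lemma finite_hk_nbrs: "finite (hk_nbrs n Bs eps x k)"
  using hk_nbrs_subset finite_Bs by (meson finite_Un finite_atLeastAtMost finite_subset)

lemma card_hk_nbrs_pos: "k \<in> {1..n} \<Longrightarrow> card (hk_nbrs n Bs eps x k) > 0"
  using finite_hk_nbrs eps_pos by (auto simp: card_gt_0_iff hk_nbrs_def)

lemma nbr_avg_le:
  assumes k: "k \<in> {1..n}" and le: "\<And>j. j \<in> hk_nbrs n Bs eps x k \<Longrightarrow> x j \<le> v"
  shows "nbr_avg x k \<le> v"
proof -
  have "(\<Sum>j\<in>hk_nbrs n Bs eps x k. x j) \<le> real (card (hk_nbrs n Bs eps x k)) * v"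
    using sum_bounded_above[of "hk_nbrs n Bs eps x k" x v] le by simp
  then show ?thesis
    using card_hk_nbrs_pos[OF k, of x] by (simp add: nbr_avg_def pos_divide_le_eq mult.commute)
qed

lemma nbr_avg_ge:
  assumes k: "k \<in> {1..n}" and ge: "\<And>j. j \<in> hk_nbrs n Bs eps x k \<Longrightarrow> v \<le> x j"
  shows "v \<le> nbr_avg x k"
proof -
  have "real (card (hk_nbrs n Bs eps x k)) * v \<le> (\<Sum>j\<in>hk_nbrs n Bs eps x k. x j)"
    using sum_bounded_below[of "hk_nbrs n Bs eps x k" v x] ge by simp
  then show ?thesis
    using card_hk_nbrs_pos[OF k, of x] by (simp add: nbr_avg_def pos_le_divide_eq mult.commute)
qed

text \<open>Since x k is within eps of b1, every stubborn agent is a neighbour; each contributes deviation 0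
to a sum of at most n + 1 terms.\<close>

lemma nbr_avg_signed_dev_le:
  assumes k: "k \<in> {1..n}" and stubborn: "\<And>j. j \<in> Bs \<Longrightarrow> x j = b1"
    and near: "\<bar>x k - b1\<bar> \<le> eps"
    and dev: "\<And>j. j \<in> {1..n} \<Longrightarrow> s * (x j - b1) \<le> u" and u: "0 \<le> u"
    and s: "s = 1 \<or> s = -1"
  shows "s * (nbr_avg x k - b1) \<le> real n / (real n + 1) * u"
proof -
  let ?N = "hk_nbrs n Bs eps x k"
  let ?A = "?N \<inter> {1..n}"
  have N_eq: "?N = ?A \<union> Bs"
    using stubborn near hk_nbrs_subset by (auto simp: hk_nbrs_def abs_minus_commute)
  have disj: "?A \<inter> Bs = {}" using Bs_disjoint by blast
  have finA: "finite ?A" by simp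
  define a where "a = real (card ?A)"
  define m where "m = real (card Bs)"
  have card_N: "real (card ?N) = a + m"
    using card_Un_disjoint[OF finA finite_Bs disj] N_eq unfolding a_def m_def by (metis of_nat_add)
  have a: "0 \<le> a" "a \<le> real n" unfolding a_def using card_mono[of "{1..n}" ?A] by auto
  have m: "1 \<le> m" unfolding m_def using finite_Bs Bs_nonempty by (simp add: Suc_leI card_gt_0_iff)
  have sum_N: "(\<Sum>j\<in>?N. s * (x j - b1)) \<le> a * u"
  proof -
    have "(\<Sum>j\<in>?N. s * (x j - b1)) = (\<Sum>j\<in>?A. s * (x j - b1)) + (\<Sum>j\<in>Bs. s * (x j - b1))"
      using sum.union_disjoint[OF finA finite_Bs disj] N_eq by metis
    also have "(\<Sum>j\<in>Bs. s * (x j - b1)) = 0" using stubborn by simp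
    also have "(\<Sum>j\<in>?A. s * (x j - b1)) \<le> a * u"
      unfolding a_def using sum_bounded_above[of ?A "\<lambda>j. s * (x j - b1)" u] dev by simp
    finally show ?thesis by simp
  qed
  have "s * (nbr_avg x k - b1) = (\<Sum>j\<in>?N. s * (x j - b1)) / (a + m)"
  proof -
    have "(\<Sum>j\<in>?N. s * (x j - b1)) = s * ((\<Sum>j\<in>?N. x j) - real (card ?N) * b1)"
      by (simp add: sum_subtractf right_diff_distrib sum_distrib_left)
    then show ?thesis using card_N a m by (simp add: nbr_avg_def field_simps)
  qed
  also have "\<dots> \<le> a * u / (a + m)" using sum_N a m by (simp add: divide_right_mono)
  also have "\<dots> \<le> real n / (real n + 1) * u"
  proof -
    have "a * (real n + 1) \<le> real n * (a + m)"
      using a m mult_left_mono[OF m, of "real n"] by (simp add: algebra_simps)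
    then have "a / (a + m) \<le> real n / (real n + 1)"
      using a m by (simp add: divide_simps)
    then have "a / (a + m) * u \<le> real n / (real n + 1) * u" by (rule mult_right_mono[OF _ u])
    then show ?thesis by simp
  qed
  finally show ?thesis .
qed

lemma hk_nbrs_eq_all_if_close:
  assumes k: "k \<in> {1..n}" and stubborn: "\<And>j. j \<in> Bs \<Longrightarrow> x j = b1"
    and close: "\<And>j. j \<in> {1..n} \<Longrightarrow> \<bar>x j - b1\<bar> \<le> eps / 2"
  shows "hk_nbrs n Bs eps x k = {1..n} \<union> Bs"
proof -
  have "\<bar>x j - x k\<bar> \<le> eps" if "j \<in> {1..n} \<union> Bs" for j
  proof -
    have "\<bar>x j - b1\<bar> \<le> eps / 2" using that close stubborn eps_pos by auto
    moreover have "\<bar>x k - b1\<bar> \<le> eps / 2" using close k by auto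
    ultimately show ?thesis by linarith
  qed
  then show ?thesis by (auto simp: hk_nbrs_def)
qed

end

locale hk_run = hk_system +
  fixes x0 :: "nat \<Rightarrow> real" and xi :: "nat \<Rightarrow> nat \<Rightarrow> real" and delta :: real
  assumes x0_range: "\<forall>i\<in>{1..n}. 0 \<le> x0 i \<and> x0 i \<le> 1"
    and noise_bound: "\<forall>k\<in>{1..n}. \<forall>t\<ge>1. \<bar>xi k t\<bar> \<le> delta"
    and delta_small: "delta \<le> eps / (2 * (real n + 1))"
begin

abbreviation X :: "nat \<Rightarrow> nat \<Rightarrow> real" where
  "X t \<equiv> hk_traj n Bs b1 eps x0 xi t"

lemma delta_nonneg: "0 \<le> delta"
  using noise_bound n_ge_1 by force

lemma X_stubborn: "k \<in> Bs \<Longrightarrow> X t k = b1"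
  by (cases t) (simp_all add: Let_def)

lemma X_Suc: "k \<in> {1..n} \<Longrightarrow> X (Suc t) k = clip01 (nbr_avg (X t) k + xi k (Suc t))"
  using Bs_disjoint by (auto simp: Let_def nbr_avg_def)

declare hk_traj.simps(2)[simp del]

lemma X_bounds: "k \<in> {1..n} \<Longrightarrow> 0 \<le> X t k \<and> X t k \<le> 1"
  using x0_range Bs_disjoint clip01_bounds X_Suc by (cases t) auto

lemma X_nbr_cases:
  "j \<in> hk_nbrs n Bs eps (X t) k \<Longrightarrow> \<bar>X t j - X t k\<bar> \<le> eps \<and> (j \<in> {1..n} \<or> X t j = b1)"
  using X_stubborn by (auto simp: hk_nbrs_def)

text \<open>An agent farther than eps from b1 ignores the stubborn agents, but its average stays within
eps of it and hence on its side of b1; a nearer agent contracts by the factor n/(n+1).\<close>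

lemma signed_dev_step:
  assumes s: "s = 1 \<or> s = -1" and dev: "\<forall>j\<in>{1..n}. s * (X t j - b1) \<le> u"
    and u: "0 \<le> u" "u \<le> eps" and k: "k \<in> {1..n}"
  shows "s * (X (Suc t) k - b1) \<le> real n / (real n + 1) * u + delta"
proof -
  let ?A = "nbr_avg (X t) k"
  have r0: "0 \<le> real n / (real n + 1) * u" using u by simp
  have "s * (?A - b1) \<le> real n / (real n + 1) * u \<or> s * (?A - b1) \<le> 0"
  proof (cases "\<bar>X t k - b1\<bar> \<le> eps")
    case True
    have "s * (?A - b1) \<le> real n / (real n + 1) * u"
      by (rule nbr_avg_signed_dev_le) (use k True X_stubborn dev u s in auto)
    then show ?thesis ..
  next
    case False
    with dev k u s have far: "s * (X t k - b1) < - eps" by force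
    have "s * (?A - X t k) \<le> eps"
    proof (cases "s = 1")
      case True
      have "?A \<le> X t k + eps" by (rule nbr_avg_le[OF k]) (use X_nbr_cases in force)
      then show ?thesis using True by simp
    next
      case False
      have "X t k - eps \<le> ?A" by (rule nbr_avg_ge[OF k]) (use X_nbr_cases in force)
      then show ?thesis using False s by simp
    qed
    then show ?thesis using far by (simp add: algebra_simps)
  qed
  moreover have "s * xi k (Suc t) \<le> delta"
    using noise_bound k s by (cases "s = 1") (auto simp: abs_le_iff)
  ultimately have "s * (?A + xi k (Suc t) - b1) \<le> real n / (real n + 1) * u + delta"
    using r0 by (auto simp: algebra_simps)
  then show ?thesis
    using X_Suc[OF k, of t] clip01_signed_dev_le[OF s b1_nonneg b1_le_1, of "?A + xi k (Suc t)"]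
      r0 delta_nonneg
    by (simp add: max_def split: if_splits)
qed

lemma max_step_le:
  assumes "\<forall>j\<in>{1..n}. X t j \<le> v" and "b1 \<le> v"
    and "\<forall>k\<in>{1..n}. xi k (Suc t) \<le> -c" and k: "k \<in> {1..n}"
  shows "X (Suc t) k \<le> max (v - c) b1"
proof -
  have "nbr_avg (X t) k \<le> v" by (rule nbr_avg_le[OF k]) (use X_nbr_cases assms in force)
  then show ?thesis
    using X_Suc[OF k, of t] clip01_le_max[of "nbr_avg (X t) k + xi k (Suc t)"] assms b1_nonneg
    by force
qed

lemma min_step_ge:
  assumes "\<forall>j\<in>{1..n}. l \<le> X t j" and "l \<le> b1"
    and "\<forall>k\<in>{1..n}. c \<le> xi k (Suc t)" and k: "k \<in> {1..n}"
  shows "min (l + c) b1 \<le> X (Suc t) k"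
proof -
  have "l \<le> nbr_avg (X t) k" by (rule nbr_avg_ge[OF k]) (use X_nbr_cases assms in force)
  then show ?thesis
    using X_Suc[OF k, of t] clip01_ge_min[of "nbr_avg (X t) k + xi k (Suc t)"] assms b1_le_1
    by force
qed

lemma dist_step_le_2delta:
  assumes band: "\<forall>j\<in>{1..n}. \<bar>X t j - b1\<bar> \<le> eps / 2"
    and i: "i \<in> {1..n}" and j: "j \<in> {1..n}"
  shows "\<bar>X (Suc t) i - X (Suc t) j\<bar> \<le> 2 * delta"
proof -
  have "nbr_avg (X t) i = nbr_avg (X t) j"
    unfolding nbr_avg_def
    using hk_nbrs_eq_all_if_close[OF i, of "X t"] hk_nbrs_eq_all_if_close[OF j, of "X t"]
      band X_stubborn
    by simp
  then have "\<bar>X (Suc t) i - X (Suc t) j\<bar> \<le> \<bar>xi i (Suc t) - xi j (Suc t)\<bar>"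
    using clip01_abs_diff_le[of "nbr_avg (X t) i + xi i (Suc t)" "nbr_avg (X t) j + xi j (Suc t)"]
    by (simp only: X_Suc[OF i] X_Suc[OF j])
  also have "\<dots> \<le> 2 * delta"
    using noise_bound[rule_format, OF i, of "Suc t"] noise_bound[rule_format, OF j, of "Suc t"]
    by (simp add: abs_le_iff)
  finally show ?thesis .
qed

lemma half_eps_step_le: "real n / (real n + 1) * (eps / 2) + delta \<le> eps / 2"
proof -
  have "real n / (real n + 1) * (eps / 2) = eps / 2 - eps / (2 * (real n + 1))"
    by (simp add: field_simps)
  then show ?thesis using delta_small by linarith
qed

lemma max_le_after_negative_noise:
  assumes c: "0 < c"
    and neg: "\<forall>k\<in>{1..n}. \<forall>t\<in>{s+1..s+K}. xi k t \<le> -c"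
  shows "t \<le> K \<Longrightarrow> \<forall>j\<in>{1..n}. X (s + t) j \<le> max (1 - real t * c) b1"
proof (induction t)
  case 0
  then show ?case using X_bounds by (force simp: le_max_iff_disj)
next
  case (Suc t)
  have "\<forall>k\<in>{1..n}. xi k (Suc (s + t)) \<le> -c" using neg Suc.prems by auto
  then have "\<forall>j\<in>{1..n}. X (Suc (s + t)) j \<le> max (max (1 - real t * c) b1 - c) b1"
    using max_step_le Suc by auto
  moreover have "max (max (1 - real t * c) b1 - c) b1 = max (1 - real (Suc t) * c) b1"
    using c by (auto simp: max_def algebra_simps)
  ultimately show ?case by simp
qed

lemma band_after_positive_noise:
  assumes c: "0 < c" and below: "\<forall>j\<in>{1..n}. X s j \<le> b1"
    and pos: "\<forall>k\<in>{1..n}. \<forall>t\<in>{s+1..s+K}. c \<le> xi k t"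
  shows "t \<le> K \<Longrightarrow> \<forall>j\<in>{1..n}. X (s + t) j - b1 \<le> eps / 2 \<and> min (real t * c) b1 \<le> X (s + t) j"
proof (induction t)
  case 0
  then show ?case using X_bounds below eps_pos by (force simp: min_le_iff_disj)
next
  case (Suc t)
  have upper: "X (Suc (s + t)) j - b1 \<le> eps / 2" if j: "j \<in> {1..n}" for j
  proof -
    have "1 * (X (Suc (s + t)) j - b1) \<le> real n / (real n + 1) * (eps / 2) + delta"
      using signed_dev_step[of 1 "s + t" "eps / 2"] Suc eps_pos j by auto
    then have "X (Suc (s + t)) j - b1 \<le> real n / (real n + 1) * (eps / 2) + delta"
      by (simp only: mult_1_left)
    then show ?thesis using half_eps_step_le by linarith
  qed
  have "\<forall>k\<in>{1..n}. c \<le> xi k (Suc (s + t))" using pos Suc.prems by auto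
  then have "\<forall>j\<in>{1..n}. min (min (real t * c) b1 + c) b1 \<le> X (Suc (s + t)) j"
    using min_step_ge Suc by auto
  moreover have "min (min (real t * c) b1 + c) b1 = min (real (Suc t) * c) b1"
    using c by (auto simp: min_def algebra_simps)
  ultimately show ?case using upper by simp
qed

lemma band_after_steering_block:
  assumes c: "0 < c" and K: "1 \<le> real K * c"
    and neg: "\<forall>k\<in>{1..n}. \<forall>t\<in>{s+1..s+K}. xi k t \<le> -c"
    and pos: "\<forall>k\<in>{1..n}. \<forall>t\<in>{s+K+1..s+2*K}. c \<le> xi k t"
  shows "\<forall>j\<in>{1..n}. \<bar>X (s + 2 * K) j - b1\<bar> \<le> eps / 2"
proof -
  have "\<forall>j\<in>{1..n}. X (s + K) j \<le> b1"
    using max_le_after_negative_noise[OF c neg, of K] K b1_nonneg by (auto simp: max_def)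
  then have "\<forall>j\<in>{1..n}. X (s + K + K) j - b1 \<le> eps / 2 \<and> min (real K * c) b1 \<le> X (s + K + K) j"
    using band_after_positive_noise[OF c, of "s + K" K K] pos by (simp add: mult_2 add.assoc)
  moreover have "min (real K * c) b1 = b1" using K b1_le_1 by simp
  ultimately show ?thesis using eps_pos by (auto simp: mult_2 add.assoc)
qed

text \<open>The solution of u' = n/(n+1) u + delta started at eps/2; it tends to the fixed point
(n+1) delta.\<close>

definition dev_bound :: "nat \<Rightarrow> real" where
  "dev_bound t = (real n + 1) * delta + (real n / (real n + 1)) ^ t * (eps / 2 - (real n + 1) * delta)"

lemma dev_bound_0: "dev_bound 0 = eps / 2"
  by (simp add: dev_bound_def)

lemma dev_bound_Suc: "dev_bound (Suc t) = real n / (real n + 1) * dev_bound t + delta"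
proof -
  define r where "r = real n / (real n + 1)"
  have "r * ((real n + 1) * delta) = real n * delta" unfolding r_def by (simp add: field_simps)
  then show ?thesis unfolding dev_bound_def r_def[symmetric] by (simp add: algebra_simps)
qed

lemma dev_bound_bounds: "0 \<le> dev_bound t \<and> dev_bound t \<le> eps / 2"
proof -
  have gap: "0 \<le> eps / 2 - (real n + 1) * delta" using delta_small by (simp add: field_simps)
  have r: "0 \<le> (real n / (real n + 1)) ^ t" "(real n / (real n + 1)) ^ t \<le> 1"
    by (simp_all add: power_le_one)
  have "0 \<le> dev_bound t" unfolding dev_bound_def using gap r delta_nonneg by simp
  moreover have "dev_bound t \<le> eps / 2"
    unfolding dev_bound_def using mult_left_le_one_le[OF gap r] by (simp add: algebra_simps)
  ultimately show ?thesis ..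
qed

lemma dev_bound_tendsto: "dev_bound \<longlonglongrightarrow> (real n + 1) * delta"
proof -
  have "(\<lambda>t. (real n / (real n + 1)) ^ t) \<longlonglongrightarrow> 0" by (rule LIMSEQ_power_zero) simp
  then have "dev_bound \<longlonglongrightarrow> (real n + 1) * delta + 0 * (eps / 2 - (real n + 1) * delta)"
    unfolding dev_bound_def by (rule tendsto_add[OF tendsto_const tendsto_mult[OF _ tendsto_const]])
  then show ?thesis by simp
qed

lemma dev_le_dev_bound:
  assumes band: "\<forall>j\<in>{1..n}. \<bar>X T j - b1\<bar> \<le> eps / 2"
  shows "\<forall>j\<in>{1..n}. \<bar>X (T + t) j - b1\<bar> \<le> dev_bound t"
proof (induction t)
  case 0
  then show ?case using band by (simp add: dev_bound_0)
next
  case (Suc t)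
  have u: "0 \<le> dev_bound t" "dev_bound t \<le> eps" using dev_bound_bounds[of t] eps_pos by auto
  have "\<forall>j\<in>{1..n}. s * (X (Suc (T + t)) j - b1) \<le> real n / (real n + 1) * dev_bound t + delta"
    if "s = 1 \<or> s = -1" for s
    using signed_dev_step[OF that _ u] Suc that by (auto simp: abs_le_iff)
  from this[of 1] this[of "-1"] show ?case by (auto simp: abs_le_iff dev_bound_Suc)
qed

lemma limsup_bounds_after_band:
  assumes band: "\<forall>j\<in>{1..n}. \<bar>X T j - b1\<bar> \<le> eps / 2"
  shows "limsup (\<lambda>t. ereal (Max {\<bar>X t i - X t j\<bar> | i j. i \<in> {1..n} \<and> j \<in> {1..n}}))
           \<le> ereal (2 * delta)"
    and "limsup (\<lambda>t. ereal (Max {\<bar>X t i - b1\<bar> | i. i \<in> {1..n}})) \<le> ereal ((real n + 1) * delta)"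
proof -
  have pairs: "finite {f i j | i j. i \<in> {1..n} \<and> j \<in> {1..n}}"
    "{f i j | i j. i \<in> {1..n} \<and> j \<in> {1..n}} \<noteq> {}" for f :: "nat \<Rightarrow> nat \<Rightarrow> real"
  proof -
    show "finite {f i j | i j. i \<in> {1..n} \<and> j \<in> {1..n}}" by (rule finite_image_set2) auto
    show "{f i j | i j. i \<in> {1..n} \<and> j \<in> {1..n}} \<noteq> {}" using n_ge_1 by auto
  qed
  have singles: "finite {f i | i. i \<in> {1..n}}" "{f i | i. i \<in> {1..n}} \<noteq> {}"
    for f :: "nat \<Rightarrow> real"
    using n_ge_1 by auto
  have dev: "\<forall>j\<in>{1..n}. \<bar>X (T + m) j - b1\<bar> \<le> dev_bound m" for m
    using dev_le_dev_bound[OF band] .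
  have in_band: "\<forall>j\<in>{1..n}. \<bar>X (T + m) j - b1\<bar> \<le> eps / 2" for m
    using dev[of m] dev_bound_bounds[of m] by auto
  have "Max {\<bar>X t i - X t j\<bar> | i j. i \<in> {1..n} \<and> j \<in> {1..n}} \<le> 2 * delta"
    if late: "Suc T \<le> t" for t
  proof -
    obtain m where t: "t = Suc (T + m)" using le_Suc_ex[OF late] by auto
    show ?thesis
      unfolding t using dist_step_le_2delta[OF in_band] by (intro Max.boundedI pairs) auto
  qed
  then have "eventually (\<lambda>t. Max {\<bar>X t i - X t j\<bar> | i j. i \<in> {1..n} \<and> j \<in> {1..n}} \<le> 2 * delta)
      sequentially"
    by (auto simp: eventually_sequentially)
  then show "limsup (\<lambda>t. ereal (Max {\<bar>X t i - X t j\<bar> | i j. i \<in> {1..n} \<and> j \<in> {1..n}}))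
      \<le> ereal (2 * delta)"
    by (rule limsup_ereal_le_if_eventually_le) simp
  have "Max {\<bar>X t i - b1\<bar> | i. i \<in> {1..n}} \<le> dev_bound (t - T)" if "T \<le> t" for t
    using dev[of "t - T"] that by (intro Max.boundedI singles) auto
  then have "eventually (\<lambda>t. Max {\<bar>X t i - b1\<bar> | i. i \<in> {1..n}} \<le> dev_bound (t - T)) sequentially"
    by (auto simp: eventually_sequentially)
  moreover have "(\<lambda>t. dev_bound (t - T)) \<longlonglongrightarrow> (real n + 1) * delta"
    by (rule LIMSEQ_offset[where k = T]) (simp add: dev_bound_tendsto)
  ultimately show "limsup (\<lambda>t. ereal (Max {\<bar>X t i - b1\<bar> | i. i \<in> {1..n}}))
      \<le> ereal ((real n + 1) * delta)"
    by (rule limsup_ereal_le_if_eventually_le)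
qed

end

text \<open>Otherwise f \<le> 0 almost surely, and then mean zero forces f = 0 almost surely.\<close>

lemma (in prob_space) prob_ge_pos_if_mean_zero:
  fixes f :: "'a \<Rightarrow> real"
  assumes f: "f \<in> borel_measurable M" and bounded: "AE \<omega> in M. \<bar>f \<omega>\<bar> \<le> d"
    and mean: "expectation f = 0" and second_moment: "expectation (\<lambda>\<omega>. (f \<omega>)\<^sup>2) > 0"
  shows "\<exists>c>0. prob {\<omega>\<in>space M. c \<le> f \<omega>} > 0"
proof (rule ccontr)
  assume "\<not> (\<exists>c>0. prob {\<omega>\<in>space M. c \<le> f \<omega>} > 0)"
  then have "prob {\<omega>\<in>space M. 1 / real (Suc k) \<le> f \<omega>} = 0" for k
    using measure_nonneg[of M "{\<omega>\<in>space M. 1 / real (Suc k) \<le> f \<omega>}"]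
    by (metis divide_pos_pos of_nat_0_less_iff order_less_le zero_less_Suc zero_less_one)
  then have "AE \<omega> in M. \<not> 1 / real (Suc k) \<le> f \<omega>" for k
    by (subst (asm) prob_Collect_eq_0) (use f in measurable)
  then have "AE \<omega> in M. \<forall>k. \<not> 1 / real (Suc k) \<le> f \<omega>" by (simp add: AE_all_countable)
  then have nonpos: "AE \<omega> in M. f \<omega> \<le> 0"
  proof (rule AE_mp, intro AE_I2 impI)
    fix \<omega> assume small: "\<forall>k. \<not> 1 / real (Suc k) \<le> f \<omega>"
    show "f \<omega> \<le> 0"
    proof (rule ccontr)
      assume "\<not> f \<omega> \<le> 0"
      then obtain k where "inverse (real (Suc k)) < f \<omega>" using reals_Archimedean[of "f \<omega>"] by force
      then show False using small[rule_format, of k] by (simp add: inverse_eq_divide)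
    qed
  qed
  have "integrable M f" by (rule integrable_const_bound[where B = d]) (use bounded f in auto)
  then have "expectation (\<lambda>\<omega>. - f \<omega>) = 0 \<longleftrightarrow> (AE \<omega> in M. - f \<omega> = 0)"
    using nonpos by (intro integral_nonneg_eq_0_iff_AE) auto
  then have "AE \<omega> in M. (f \<omega>)\<^sup>2 = 0" using mean by (auto elim: AE_mp intro!: AE_I2)
  then have "expectation (\<lambda>\<omega>. (f \<omega>)\<^sup>2) = expectation (\<lambda>\<omega>. 0)"
    by (rule integral_cong_AE[rotated 2]) (use f in measurable)
  then show False using second_moment by simp
qed

lemma (in prob_space) exists_two_sided_tail_prob_pos:
  fixes f :: "'a \<Rightarrow> real"
  assumes f: "f \<in> borel_measurable M" and bounded: "AE \<omega> in M. \<bar>f \<omega>\<bar> \<le> d"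
    and mean: "expectation f = 0" and second_moment: "expectation (\<lambda>\<omega>. (f \<omega>)\<^sup>2) > 0"
  shows "\<exists>c>0. 0 < prob (f -` {..-c} \<inter> space M) \<and> 0 < prob (f -` {c..} \<inter> space M)"
proof -
  have neg_f: "(\<lambda>\<omega>. - f \<omega>) \<in> borel_measurable M" using f by measurable
  obtain c1 where c1: "0 < c1" "0 < prob {\<omega>\<in>space M. c1 \<le> f \<omega>}"
    using prob_ge_pos_if_mean_zero[OF f bounded mean second_moment] by blast
  obtain c2 where c2: "0 < c2" "0 < prob {\<omega>\<in>space M. c2 \<le> - f \<omega>}"
    using prob_ge_pos_if_mean_zero[OF neg_f, of d] bounded mean second_moment by auto
  define c where "c = min c1 c2"
  have c_le: "c \<le> c1" "c \<le> c2" by (simp_all add: c_def)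
  have f_events: "f -` A \<inter> space M \<in> events" if "A \<in> sets borel" for A
    using measurable_sets[OF f that] .
  have "prob {\<omega>\<in>space M. c2 \<le> - f \<omega>} \<le> prob (f -` {..-c} \<inter> space M)"
    using c_le by (intro finite_measure_mono f_events) auto
  moreover have "prob {\<omega>\<in>space M. c1 \<le> f \<omega>} \<le> prob (f -` {c..} \<inter> space M)"
    using c_le by (intro finite_measure_mono f_events) auto
  moreover have "0 < c" using c1 c2 by (simp add: c_def)
  ultimately show ?thesis using c1(2) c2(2) by (intro exI[of _ c]) auto
qed

lemma (in prob_space) AE_all_bounded_if_identically_distributed:
  fixes X :: "'i \<Rightarrow> 'a \<Rightarrow> real"
  assumes "countable I" and Y: "Y \<in> borel_measurable M"
    and X: "\<And>p. p \<in> I \<Longrightarrow> X p \<in> borel_measurable M"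
    and distr: "\<And>p. p \<in> I \<Longrightarrow> distr M borel (X p) = distr M borel Y"
    and bounded: "AE \<omega> in M. \<bar>Y \<omega>\<bar> \<le> d"
  shows "AE \<omega> in M. \<forall>p\<in>I. \<bar>X p \<omega>\<bar> \<le> d"
proof (subst AE_ball_countable[OF \<open>countable I\<close>], intro ballI)
  fix p assume p: "p \<in> I"
  have "AE x in distr M borel Y. \<bar>x\<bar> \<le> d"
    using bounded by (subst AE_distr_iff[OF Y]) auto
  then have "AE x in distr M borel (X p). \<bar>x\<bar> \<le> d" by (simp only: distr[OF p])
  then show "AE \<omega> in M. \<bar>X p \<omega>\<bar> \<le> d" by (rule AE_distrD[OF X[OF p]])
qed

lemma (in prob_space) indep_events_preimage_blocks:
  fixes X :: "'i \<Rightarrow> 'a \<Rightarrow> real" and B :: "'j \<Rightarrow> 'i set"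
  assumes ind: "indep_vars (\<lambda>_. borel) X I"
    and B: "\<And>j. B j \<subseteq> I" "\<And>j. finite (B j)" "\<And>j. B j \<noteq> {}" and disj: "disjoint_family B"
    and S: "\<And>p. S p \<in> sets borel"
  shows "indep_events (\<lambda>j. \<Inter>p\<in>B j. X p -` S p \<inter> space M) UNIV"
proof (rule indep_eventsI)
  let ?F = "\<lambda>p. X p -` S p \<inter> space M"
  have prob_INT: "prob (\<Inter>p\<in>J. ?F p) = (\<Prod>p\<in>J. prob (?F p))" if "J \<noteq> {}" "finite J" "J \<subseteq> I" for J
    using indep_varsD[OF ind that] S by simp
  have "X p \<in> borel_measurable M" if "p \<in> I" for p
    using conjunct1[OF ind[unfolded indep_vars_def2]] that by simp
  then have "?F p \<in> events" if "p \<in> I" for p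
    using measurable_sets S that by blast
  then show "(\<Inter>p\<in>B j. ?F p) \<in> events" for j
    using B by (intro sets.finite_INT) auto
  fix J :: "'j set" assume J: "J \<subseteq> UNIV" "finite J" "J \<noteq> {}"
  have "prob (\<Inter>j\<in>J. \<Inter>p\<in>B j. ?F p) = prob (\<Inter>p\<in>\<Union>(B ` J). ?F p)" by (rule arg_cong[where f = prob]) blast
  also have "\<dots> = (\<Prod>p\<in>\<Union>(B ` J). prob (?F p))" by (rule prob_INT) (use J B in auto)
  also have "\<dots> = (\<Prod>j\<in>J. \<Prod>p\<in>B j. prob (?F p))"
    by (rule prod.UNION_disjoint) (use J B disj in \<open>auto simp: disjoint_family_on_def\<close>)
  also have "\<dots> = (\<Prod>j\<in>J. prob (\<Inter>p\<in>B j. ?F p))" using prob_INT B by simp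
  finally show "prob (\<Inter>j\<in>J. \<Inter>p\<in>B j. ?F p) = (\<Prod>j\<in>J. prob (\<Inter>p\<in>B j. ?F p))" .
qed

lemma (in prob_space) AE_exists_if_indep_events_prob_ge:
  fixes E :: "nat \<Rightarrow> 'a set"
  assumes ind: "indep_events E UNIV" and q: "0 < q" "\<And>j. q \<le> prob (E j)"
  shows "AE \<omega> in M. \<exists>j. \<omega> \<in> E j"
proof -
  define U where "U N = (\<Union>m\<in>{N..}. E m)" for N
  have E: "range E \<subseteq> events" using ind by (simp add: indep_events_def)
  then have U: "range U \<subseteq> events" unfolding U_def by auto
  have "q \<le> prob (U N)" for N
  proof -
    have "prob (E N) \<le> prob (U N)" using U by (intro finite_measure_mono) (auto simp: U_def)
    then show ?thesis using q(2)[of N] by linarith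
  qed
  moreover have "(\<lambda>N. prob (U N)) \<longlonglongrightarrow> prob (\<Inter>N. U N)"
    by (rule finite_Lim_measure_decseq[OF U]) (auto simp: U_def decseq_def intro: order_trans)
  ultimately have "q \<le> prob (\<Inter>N. U N)" by (intro LIMSEQ_le_const) auto
  then have "prob (\<Inter>N. U N) = 1" using borel_0_1_law[OF ind] q(1) unfolding U_def by auto
  then have "AE \<omega> in M. \<omega> \<in> (\<Inter>N. U N)" using U by (subst (asm) prob_eq_1) auto
  then show ?thesis by (rule AE_mp) (auto simp: U_def intro!: AE_I2)
qed

lemma mod_div_in_block:
  assumes "L * m + 1 \<le> (t::nat)" "t \<le> L * m + L"
  shows "(t - 1) mod L = t - 1 - L * m" and "(t - 1) div L = m"
proof -
  have "t - 1 = L * m + (t - 1 - L * m)" and small: "t - 1 - L * m < L" using assms by linarith+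
  then have "(t - 1) mod L = (L * m + (t - 1 - L * m)) mod L" by simp
  also have "\<dots> = t - 1 - L * m" using small by simp
  finally show "(t - 1) mod L = t - 1 - L * m" .
  show "(t - 1) div L = m" by (rule div_nat_eqI) (use assms in auto)
qed

text \<open>The blocks {2Km+1..2Km+2K}, m \<in> \<nat>, give independent events of one common positive
probability; the second Borel-Cantelli lemma yields one of them almost surely.\<close>

lemma (in prob_space) AE_exists_steering_block:
  fixes \<xi> :: "nat \<Rightarrow> nat \<Rightarrow> 'a \<Rightarrow> real"
  assumes n: "n \<ge> 1" and K: "K \<ge> 1"
    and ind: "indep_vars (\<lambda>_. borel) (\<lambda>(i, t). \<xi> i t) ({1..n} \<times> {1..})"
    and Y: "Y \<in> borel_measurable M"
    and distr: "\<And>i t. i \<in> {1..n} \<Longrightarrow> 1 \<le> t \<Longrightarrow> distr M borel (\<xi> i t) = distr M borel Y"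
    and neg: "0 < prob (Y -` {..-c} \<inter> space M)" and pos: "0 < prob (Y -` {c..} \<inter> space M)"
  shows "AE \<omega> in M. \<exists>s. (\<forall>k\<in>{1..n}. \<forall>t\<in>{s+1..s+K}. \<xi> k t \<omega> \<le> -c)
                       \<and> (\<forall>k\<in>{1..n}. \<forall>t\<in>{s+K+1..s+2*K}. c \<le> \<xi> k t \<omega>)"
proof -
  define L where "L = 2 * K"
  define S where "S p = (if (snd p - 1) mod L < K then {..-c} else ({c..} :: real set))"
    for p :: "nat \<times> nat"
  define B where "B m = {1..n} \<times> {L * m + 1..L * m + L}" for m
  define F where "F p = (\<lambda>(i, t). \<xi> i t) p -` S p \<inter> space M" for p
  define q where "q = min (prob (Y -` {..-c} \<inter> space M)) (prob (Y -` {c..} \<inter> space M))"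
  have S: "S p \<in> sets borel" for p by (simp add: S_def)
  have B: "B m \<subseteq> {1..n} \<times> {1..}" "finite (B m)" "B m \<noteq> {}" for m
    using n K by (auto simp: B_def L_def)
  have disj: "disjoint_family B"
    unfolding disjoint_family_on_def
  proof (intro ballI impI)
    fix m m' :: nat assume "m \<noteq> m'"
    show "B m \<inter> B m' = {}"
    proof (rule ccontr)
      assume "B m \<inter> B m' \<noteq> {}"
      then obtain i t where "(i, t) \<in> B m" "(i, t) \<in> B m'" by auto
      then have "L * m + 1 \<le> t" "t \<le> L * m + L" "L * m' + 1 \<le> t" "t \<le> L * m' + L"
        by (auto simp: B_def)
      then have "(t - 1) div L = m" "(t - 1) div L = m'" using mod_div_in_block(2) by blast+
      with \<open>m \<noteq> m'\<close> show False by simp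
    qed
  qed
  have ind_blocks: "indep_events (\<lambda>m. \<Inter>p\<in>B m. F p) UNIV"
    unfolding F_def by (rule indep_events_preimage_blocks[OF ind B disj S])
  have q_le: "q \<le> prob (F p)" if p_in: "p \<in> B m" for p m
  proof -
    obtain i t where p: "p = (i, t)" "i \<in> {1..n}" "1 \<le> t" using p_in by (auto simp: B_def)
    have "\<xi> i t \<in> borel_measurable M"
      using conjunct1[OF ind[unfolded indep_vars_def2]] p by force
    then have "prob (F p) = prob (Y -` S p \<inter> space M)"
      using measure_distr[OF _ S, of "\<xi> i t" M] measure_distr[OF Y S] distr[OF p(2,3)]
      by (simp add: F_def p(1))
    then show ?thesis unfolding q_def S_def by auto
  qed
  have block_prob: "q ^ (n * L) \<le> prob (\<Inter>p\<in>B m. F p)" for m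
  proof -
    have "q ^ (n * L) = (\<Prod>p\<in>B m. q)" by (simp add: B_def L_def card_cartesian_product)
    also have "\<dots> \<le> (\<Prod>p\<in>B m. prob (F p))"
      by (rule prod_mono) (use q_le neg pos in \<open>auto simp: q_def\<close>)
    also have "\<dots> = prob (\<Inter>p\<in>B m. F p)"
      unfolding F_def using indep_varsD[OF ind B(3,2,1)] S by simp
    finally show ?thesis .
  qed
  have "0 < q" using neg pos by (simp add: q_def)
  then have "AE \<omega> in M. \<exists>m. \<omega> \<in> (\<Inter>p\<in>B m. F p)"
    using block_prob by (intro AE_exists_if_indep_events_prob_ge[OF ind_blocks, of "q ^ (n * L)"]) auto
  then show ?thesis
  proof (rule AE_mp, intro AE_I2 impI)
    fix \<omega> assume "\<exists>m. \<omega> \<in> (\<Inter>p\<in>B m. F p)"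
    then obtain m where "\<omega> \<in> (\<Inter>p\<in>B m. F p)" by blast
    then have in_S: "\<xi> k t \<omega> \<in> S (k, t)"
      if "k \<in> {1..n}" "L * m + 1 \<le> t" "t \<le> L * m + L" for k t
      using that by (auto simp: B_def F_def)
    have "\<xi> k t \<omega> \<le> -c" if k: "k \<in> {1..n}" and t: "t \<in> {L * m + 1..L * m + K}" for k t
    proof -
      have "L * m + 1 \<le> t" "t \<le> L * m + L" using t by (auto simp: L_def)
      moreover from this have "(t - 1) mod L < K" using t mod_div_in_block(1)[of L m t] by auto
      ultimately show ?thesis using in_S[OF k, of t] by (simp add: S_def)
    qed
    moreover have "c \<le> \<xi> k t \<omega>" if k: "k \<in> {1..n}" and t: "t \<in> {L * m + K + 1..L * m + 2 * K}"
      for k t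
    proof -
      have "L * m + 1 \<le> t" "t \<le> L * m + L" using t by (auto simp: L_def)
      moreover from this have "\<not> (t - 1) mod L < K" using t mod_div_in_block(1)[of L m t] by auto
      ultimately show ?thesis using in_S[OF k, of t] by (simp add: S_def)
    qed
    ultimately show "\<exists>s. (\<forall>k\<in>{1..n}. \<forall>t\<in>{s+1..s+K}. \<xi> k t \<omega> \<le> -c)
                 \<and> (\<forall>k\<in>{1..n}. \<forall>t\<in>{s+K+1..s+2*K}. c \<le> \<xi> k t \<omega>)"
      by blast
  qed
qed

theorem theorem1:
  fixes M :: "'a measure" and n :: nat and Bs :: "nat set" and b1 eps delta :: real
    and x0 :: "nat \<Rightarrow> real" and \<xi> :: "nat \<Rightarrow> nat \<Rightarrow> 'a \<Rightarrow> real"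
  assumes "prob_space M"
    and "n \<ge> 1"
    and "finite Bs" and "Bs \<noteq> {}" and "Bs \<inter> {1..n} = {}"
    and "0 \<le> b1" and "b1 \<le> 1"
    and "0 < eps" and "eps \<le> 1"
    and "\<forall>i\<in>{1..n}. 0 \<le> x0 i \<and> x0 i \<le> 1"
    and "0 < delta" and "delta < eps / (2 * (real n + 1))"
    and "\<forall>i\<in>{1..n}. \<forall>t\<ge>1. \<xi> i t \<in> borel_measurable M"
    and "prob_space.indep_vars M (\<lambda>_. borel) (\<lambda>(i, t). \<xi> i t) ({1..n} \<times> {1..})"
    and "\<forall>i\<in>{1..n}. \<forall>t\<ge>1. distr M borel (\<xi> i t) = distr M borel (\<xi> 1 1)"
    and "integral\<^sup>L M (\<xi> 1 1) = 0"
    and "integral\<^sup>L M (\<lambda>\<omega>. (\<xi> 1 1 \<omega>)\<^sup>2) > 0"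
    and "AE \<omega> in M. \<bar>\<xi> 1 1 \<omega>\<bar> \<le> delta"
  shows "AE \<omega> in M.
     limsup (\<lambda>t. ereal (Max {\<bar>hk_traj n Bs b1 eps x0 (\<lambda>i s. \<xi> i s \<omega>) t i
                              - hk_traj n Bs b1 eps x0 (\<lambda>i s. \<xi> i s \<omega>) t j\<bar> | i j. i \<in> {1..n} \<and> j \<in> {1..n}}))
       \<le> ereal (2 * delta)
   \<and> limsup (\<lambda>t. ereal (Max {\<bar>hk_traj n Bs b1 eps x0 (\<lambda>i s. \<xi> i s \<omega>) t i - b1\<bar> | i. i \<in> {1..n}}))
       \<le> ereal ((real n + 1) * delta)"
proof -
  interpret prob_space M by fact
  have Y: "\<xi> 1 1 \<in> borel_measurable M" using assms(2,13) by auto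
  obtain c where c: "0 < c" and neg: "0 < prob (\<xi> 1 1 -` {..-c} \<inter> space M)"
    and pos: "0 < prob (\<xi> 1 1 -` {c..} \<inter> space M)"
    using exists_two_sided_tail_prob_pos[OF Y assms(18,16,17)] by blast
  define K where "K = nat \<lceil>1 / c\<rceil>"
  have "1 / c \<le> real K" unfolding K_def by linarith
  then have K: "1 \<le> real K * c" using c by (simp add: field_simps)
  then have K_pos: "1 \<le> K" by (cases K) auto
  have same_distr: "distr M borel (\<xi> i t) = distr M borel (\<xi> 1 1)" if "i \<in> {1..n}" "1 \<le> t" for i t
    using assms(15) that by blast
  have "AE \<omega> in M. \<exists>s. (\<forall>k\<in>{1..n}. \<forall>t\<in>{s+1..s+K}. \<xi> k t \<omega> \<le> -c)
                          \<and> (\<forall>k\<in>{1..n}. \<forall>t\<in>{s+K+1..s+2*K}. c \<le> \<xi> k t \<omega>)"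
    by (rule AE_exists_steering_block[OF assms(2) K_pos assms(14) Y same_distr neg pos])
  moreover have "AE \<omega> in M. \<forall>p\<in>{1..n} \<times> {1..}. \<bar>(\<lambda>(i, t). \<xi> i t) p \<omega>\<bar> \<le> delta"
    using assms(13,15,18)
    by (intro AE_all_bounded_if_identically_distributed[OF countableI_type Y]) auto
  ultimately show ?thesis
  proof eventually_elim
    case (elim \<omega>)
    interpret hk_run n Bs b1 eps x0 "\<lambda>i s. \<xi> i s \<omega>" delta
      using assms(2-8,10,12) elim(2) by unfold_locales auto
    from elim(1) obtain s where "\<forall>j\<in>{1..n}. \<bar>X (s + 2 * K) j - b1\<bar> \<le> eps / 2"
      using band_after_steering_block[OF c K] by blast
    then show ?case using limsup_bounds_after_band by blast
  qed
qed

end
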